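(* For any finite set $P\subset\mathbb{R}^1$ containing the source $s$, any integer $k\ge 1$ and any $\alpha>1$, the canonical range assignment satisfies $$\mathrm{cost}_\alpha(\rho_k(P))\le\Big(1+\frac{2^\alpha}{k^{\alpha-1}}\Big)\cdot\mathrm{cost}_\alpha(\rho_{\mathrm{opt}}(P)).$$
   Context: Setting: points in $\mathbb{R}^1$; a range assignment $\rho$ on a finite set $P$ containing source $s$ induces the directed graph with edge $(p,q)$ iff $|pq|\le\rho(p)$; feasible if this graph contains an arborescence rooted at $s$ spanning $P$; $\mathrm{cost}_\alpha(\rho(P))=\sum_{p\in P}\rho(p)^\alpha$. Write $P=L\cup\{s\}\cup R$, $L=\{\ell_1,\dots,\ell_{|L|}\}$ left of $s$ and $R=\{r_1,\dots,r_{|R|}\}$ right of $s$, numbered by increasing distance from $s$; $\ell_{|L|},r_{|R|}$ are extreme. Successor: $r_i\mapsto r_{i+1}$, $\ell_i\mapsto\ell_{i+1}$, $s$ has successors $r_1,\ell_1$, extreme points have none. A chain is a path using only edges from a point to its successor. The standard range $\rho_{\mathrm{st}}(p)$ of a non-extreme $p\ne s$ is its distance to its successor, $0$ for extreme points; $s$ has standard ranges $|s\ell_1|,|sr_1|$. A zero-range point is a non-extreme point with range $0$. In a broadcast tree $\mathcal{B}$ (arborescence rooted at $s$) a point of $R\cup L$ is root-crossing if it has a child on the other side of $s$; $s$ is root-crossing if it has children in both $L$ and $R$. $\rho_{\mathrm{opt}}(P)$: if all of $P\setminus\{s\}$ lies on one side of $s$, every point gets its standard range; otherwise $\rho_{\mathrm{opt}}$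 is a minimum-cost feasible assignment whose graph contains a broadcast tree with a single root-crossing point $p^*$, a chain from $s$ to $p^*$, all points within reach of $p^*$ except those on that chain being children of $p^*$, and chains from the rightmost (resp. leftmost) point within reach of $p^*$ to $r_{|R|}$ (resp. $\ell_{|L|}$). Canonical assignment $\rho_k$: if all points lie on one side of $s$, $\rho_k=\rho_{\mathrm{opt}}$; otherwise, with $Z$ the zero-range points of $\rho_{\mathrm{opt}}(P)$ and $Z_k=Z$ if $|Z|\le k$, else $Z_k$ the $k$ points of $Z$ with largest standard ranges (ties arbitrary), set $\rho_k=\rho_{\mathrm{opt}}$ on $P\setminus Z$, $\rho_k=0$ on $Z_k$, $\rho_k=\rho_{\mathrm{st}}$ on $Z\setminus Z_k$. *)

theory Defs
  imports Complex_Main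
begin

text \<open>Points of P are reals; s is the source. A range assignment is a function
  real => real (only its values on P matter).\<close>

definition has_right :: "real set \<Rightarrow> real \<Rightarrow> bool" where
  "has_right P x \<longleftrightarrow> (\<exists>y\<in>P. y > x)"

definition has_left :: "real set \<Rightarrow> real \<Rightarrow> bool" where
  "has_left P x \<longleftrightarrow> (\<exists>y\<in>P. y < x)"

definition right_nb :: "real set \<Rightarrow> real \<Rightarrow> real" where
  "right_nb P x = Min {y\<in>P. y > x}"

definition left_nb :: "real set \<Rightarrow> real \<Rightarrow> real" where
  "left_nb P x = Max {y\<in>P. y < x}"

definition has_succ :: "real set \<Rightarrow> real \<Rightarrow> real \<Rightarrow> bool" where
  "has_succ P s p \<longleftrightarrow> (if p > s then has_right P p else has_left P p)"

definition succ_pt :: "real set \<Rightarrow> real \<Rightarrow> real \<Rightarrow> real" where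
  "succ_pt P s p = (if p > s then right_nb P p else left_nb P p)"

definition pred_pt :: "real set \<Rightarrow> real \<Rightarrow> real \<Rightarrow> real" where
  "pred_pt P s q = (if q > s then left_nb P q else right_nb P q)"

definition extreme :: "real set \<Rightarrow> real \<Rightarrow> real \<Rightarrow> bool" where
  "extreme P s p \<longleftrightarrow> p \<noteq> s \<and> \<not> has_succ P s p"

text \<open>Standard range. For s (which has two standard ranges) we take the larger;
  this value is only used when all points lie on one side of s.\<close>
definition rho_st :: "real set \<Rightarrow> real \<Rightarrow> real \<Rightarrow> real" where
  "rho_st P s p =
     (if p = s then
        max (if has_right P s then right_nb P s - s else 0)
            (if has_left P s then s - left_nb P s else 0)
      else if has_succ P s p then \<bar>succ_pt P s p - p\<bar> else 0)"

definition cost :: "real \<Rightarrow> real set \<Rightarrow> (real \<Rightarrow> real) \<Rightarrow> real" where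
  "cost \<alpha> P \<rho> = (\<Sum>p\<in>P. \<rho> p powr \<alpha>)"

text \<open>Broadcast tree (arborescence rooted at s spanning P) in the graph induced by
  \<rho>, given by a parent function on P - {s}.\<close>
definition is_btree :: "real set \<Rightarrow> real \<Rightarrow> (real \<Rightarrow> real) \<Rightarrow> (real \<Rightarrow> real) \<Rightarrow> bool" where
  "is_btree P s \<rho> par \<longleftrightarrow>
     (\<forall>q\<in>P - {s}. par q \<in> P \<and> par q \<noteq> q \<and> \<bar>q - par q\<bar> \<le> \<rho> (par q)
                  \<and> (\<exists>n. (par ^^ n) q = s))"

definition feasible :: "real set \<Rightarrow> real \<Rightarrow> (real \<Rightarrow> real) \<Rightarrow> bool" where
  "feasible P s \<rho> \<longleftrightarrow> (\<exists>par. is_btree P s \<rho> par)"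

definition is_child :: "real set \<Rightarrow> real \<Rightarrow> (real \<Rightarrow> real) \<Rightarrow> real \<Rightarrow> real \<Rightarrow> bool" where
  "is_child P s par c p \<longleftrightarrow> c \<in> P - {s} \<and> par c = p"

definition root_crossing :: "real set \<Rightarrow> real \<Rightarrow> (real \<Rightarrow> real) \<Rightarrow> real \<Rightarrow> bool" where
  "root_crossing P s par p \<longleftrightarrow> p \<in> P \<and>
     (if p = s then (\<exists>c. is_child P s par c s \<and> c < s) \<and> (\<exists>c. is_child P s par c s \<and> c > s)
      else if p < s then (\<exists>c. is_child P s par c p \<and> c > s)
      else (\<exists>c. is_child P s par c p \<and> c < s))"

definition on_path :: "real \<Rightarrow> (real \<Rightarrow> real) \<Rightarrow> real \<Rightarrow> real \<Rightarrow> bool" where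
  "on_path s par p q \<longleftrightarrow> (\<exists>n. (par ^^ n) p = q \<and> (\<forall>m<n. (par ^^ m) p \<noteq> s))"

definition in_reach :: "real set \<Rightarrow> (real \<Rightarrow> real) \<Rightarrow> real \<Rightarrow> real set" where
  "in_reach P \<rho> p = {q\<in>P. \<bar>q - p\<bar> \<le> \<rho> p}"

definition one_sided :: "real set \<Rightarrow> real \<Rightarrow> bool" where
  "one_sided P s \<longleftrightarrow> (\<forall>p\<in>P. p \<ge> s) \<or> (\<forall>p\<in>P. p \<le> s)"

definition structured_tree :: "real set \<Rightarrow> real \<Rightarrow> (real \<Rightarrow> real) \<Rightarrow> (real \<Rightarrow> real) \<Rightarrow> real \<Rightarrow> bool" where
  "structured_tree P s \<rho> par pstar \<longleftrightarrow>
     is_btree P s \<rho> par \<and>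
     {p. root_crossing P s par p} = {pstar} \<and>
     (\<forall>q. on_path s par pstar q \<and> q \<noteq> s \<longrightarrow> par q = pred_pt P s q) \<and>
     (\<forall>q\<in>in_reach P \<rho> pstar. q \<noteq> pstar \<and> \<not> on_path s par pstar q \<longrightarrow> par q = pstar) \<and>
     (\<forall>q\<in>P. q > s \<and> q > Max (in_reach P \<rho> pstar) \<longrightarrow> par q = pred_pt P s q) \<and>
     (\<forall>q\<in>P. q < s \<and> q < Min (in_reach P \<rho> pstar) \<longrightarrow> par q = pred_pt P s q)"

definition is_rho_opt :: "real \<Rightarrow> real set \<Rightarrow> real \<Rightarrow> (real \<Rightarrow> real) \<Rightarrow> bool" where
  "is_rho_opt \<alpha> P s \<rho> \<longleftrightarrow>
     (if one_sided P s then (\<forall>p\<in>P. \<rho> p = rho_st P s p)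
      else (\<forall>p\<in>P. \<rho> p \<ge> 0) \<and> feasible P s \<rho> \<and>
           (\<forall>\<rho>'. (\<forall>p\<in>P. \<rho>' p \<ge> 0) \<and> feasible P s \<rho>' \<longrightarrow> cost \<alpha> P \<rho> \<le> cost \<alpha> P \<rho>') \<and>
           (\<exists>par pstar. structured_tree P s \<rho> par pstar))"

definition zero_range_pts :: "real set \<Rightarrow> real \<Rightarrow> (real \<Rightarrow> real) \<Rightarrow> real set" where
  "zero_range_pts P s \<rho> = {p\<in>P. \<not> extreme P s p \<and> \<rho> p = 0}"

definition is_Zk :: "nat \<Rightarrow> real set \<Rightarrow> real \<Rightarrow> (real \<Rightarrow> real) \<Rightarrow> real set \<Rightarrow> bool" where
  "is_Zk k P s \<rho> Zk \<longleftrightarrow>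
     (let Z = zero_range_pts P s \<rho> in
        Zk \<subseteq> Z \<and> card Zk = min k (card Z) \<and>
        (\<forall>z\<in>Zk. \<forall>z'\<in>Z - Zk. rho_st P s z' \<le> rho_st P s z))"

definition rho_k :: "real set \<Rightarrow> real \<Rightarrow> (real \<Rightarrow> real) \<Rightarrow> real set \<Rightarrow> real \<Rightarrow> real" where
  "rho_k P s \<rho>opt Zk p =
     (if one_sided P s then \<rho>opt p
      else if p \<in> Zk then 0
      else if p \<in> zero_range_pts P s \<rho>opt then rho_st P s p
      else \<rho>opt p)"

end

theory Submission
  imports Defs
begin

text \<open>Let p* be the root-crossing point of the structured broadcast tree of \<rho>opt and
  R = \<rho>opt p*. A zero-range point has no child, so it cannot lie on the chain from s to p*, and
  its successor cannot lie beyond the reach of p* (it would be its child there). Hence the segments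
  from zero-range points to their successors are non-overlapping subsegments of [p* - R, p* + R],
  and their standard ranges sum to at most 2R. If Zk misses some zero-range point, it holds k
  standard ranges at least as large, so each missed one is at most 2R/k. The extra cost of \<rho>k
  is therefore at most (2R/k) powr (\<alpha> - 1) * 2R = 2 powr \<alpha> / k powr (\<alpha> - 1) * R powr \<alpha>,
  and R powr \<alpha> is part of the cost of \<rho>opt.\<close>

lemma sum_interval_lengths_le:
  fixes lo hi :: "'i \<Rightarrow> real"
  assumes "finite I" "m \<le> M"
    and "\<And>i. i \<in> I \<Longrightarrow> m \<le> lo i \<and> lo i < hi i \<and> hi i \<le> M"
    and "\<And>i j. i \<in> I \<Longrightarrow> j \<in> I \<Longrightarrow> i \<noteq> j \<Longrightarrow> hi i \<le> lo j \<or> hi j \<le> lo i"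
  shows "(\<Sum>i\<in>I. hi i - lo i) \<le> M - m"
  using assms
proof (induction "card I" arbitrary: I M rule: less_induct)
  case less
  show ?case
  proof (cases "I = {}")
    case True
    then show ?thesis using less.prems by simp
  next
    case False
    have "Max (lo ` I) \<in> lo ` I" using False less.prems(1) by simp
    then obtain i0 where i0: "i0 \<in> I" "lo i0 = Max (lo ` I)" by (metis imageE)
    have below: "hi j \<le> lo i0" if "j \<in> I - {i0}" for j
    proof -
      have "lo j \<le> lo i0" using i0 that less.prems(1) by simp
      then show ?thesis using less.prems(3,4) i0(1) that by fastforce
    qed
    have "(\<Sum>i\<in>I - {i0}. hi i - lo i) \<le> lo i0 - m"
    proof (rule less.hyps)
      show "card (I - {i0}) < card I" using i0(1) less.prems(1) by (meson card_Diff1_less)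
    qed (use less.prems i0(1) below in auto)
    moreover have "(\<Sum>i\<in>I. hi i - lo i) = (hi i0 - lo i0) + (\<Sum>i\<in>I - {i0}. hi i - lo i)"
      using i0(1) less.prems(1) by (simp add: sum.remove)
    moreover have "hi i0 \<le> M" using less.prems(3) i0(1) by auto
    ultimately show ?thesis by linarith
  qed
qed

lemma powr_le_powr_minus_one_mult:
  fixes x t \<alpha> :: real
  assumes "0 \<le> x" "x \<le> t" "1 \<le> \<alpha>"
  shows "x powr \<alpha> \<le> t powr (\<alpha> - 1) * x"
proof -
  have "x powr \<alpha> = x powr (\<alpha> - 1) * x"
    using powr_add[of x "\<alpha> - 1" 1] assms(1) by simp
  also have "\<dots> \<le> t powr (\<alpha> - 1) * x"
    using assms by (intro mult_right_mono powr_mono2) auto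
  finally show ?thesis .
qed

lemma sum_powr_outside_top_le:
  fixes f :: "'a \<Rightarrow> real"
  assumes fin: "finite Z" and sub: "Zk \<subseteq> Z" and card: "card Zk = min k (card Z)"
    and top: "\<And>z z'. z \<in> Zk \<Longrightarrow> z' \<in> Z - Zk \<Longrightarrow> f z' \<le> f z"
    and nonneg: "\<And>z. z \<in> Z \<Longrightarrow> 0 \<le> f z" and total: "(\<Sum>z\<in>Z. f z) \<le> S"
    and "1 \<le> k" "1 \<le> \<alpha>"
  shows "(\<Sum>z\<in>Z - Zk. f z powr \<alpha>) \<le> S powr \<alpha> / real k powr (\<alpha> - 1)"
proof (cases "card Z \<le> k")
  case True
  then have "Zk = Z" using card_subset_eq[OF fin sub] card by simp
  then show ?thesis by simp
next
  case False
  have split: "(\<Sum>z\<in>Z. f z) = (\<Sum>z\<in>Z - Zk. f z) + (\<Sum>z\<in>Zk. f z)"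
    by (rule sum.subset_diff[OF sub fin])
  have "0 \<le> (\<Sum>z\<in>Zk. f z)" "0 \<le> (\<Sum>z\<in>Z - Zk. f z)"
    using nonneg sub by (auto intro: sum_nonneg)
  then have S0: "0 \<le> S" and rest_le: "(\<Sum>z\<in>Z - Zk. f z) \<le> S" and top_le: "(\<Sum>z\<in>Zk. f z) \<le> S"
    using split total by linarith+
  have small: "f z' \<le> S / k" if z': "z' \<in> Z - Zk" for z'
  proof -
    have "real k * f z' = (\<Sum>z\<in>Zk. f z')" using card False by simp
    also have "\<dots> \<le> (\<Sum>z\<in>Zk. f z)" using top z' by (intro sum_mono) auto
    also have "\<dots> \<le> S" by (rule top_le)
    finally show ?thesis using \<open>1 \<le> k\<close> by (simp add: field_simps)
  qed
  have "(\<Sum>z\<in>Z - Zk. f z powr \<alpha>) \<le> (\<Sum>z\<in>Z - Zk. (S / k) powr (\<alpha> - 1) * f z)"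
    using small nonneg \<open>1 \<le> \<alpha>\<close> by (intro sum_mono powr_le_powr_minus_one_mult) auto
  also have "\<dots> \<le> (S / k) powr (\<alpha> - 1) * S"
    using rest_le by (simp add: sum_distrib_left[symmetric] mult_left_mono)
  also have "\<dots> = S powr \<alpha> / real k powr (\<alpha> - 1)"
    using powr_add[of S "\<alpha> - 1" 1] S0 by (simp add: powr_divide)
  finally show ?thesis .
qed

lemma right_nb_mem:
  assumes "finite P" "has_right P x"
  shows "right_nb P x \<in> P" "x < right_nb P x"
proof -
  have "{y\<in>P. x < y} \<noteq> {}" using assms(2) unfolding has_right_def by auto
  then have "Min {y\<in>P. x < y} \<in> {y\<in>P. x < y}" using assms(1) by (intro Min_in) auto
  then show "right_nb P x \<in> P" "x < right_nb P x" unfolding right_nb_def by auto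
qed

lemma right_nb_le: "finite P \<Longrightarrow> y \<in> P \<Longrightarrow> x < y \<Longrightarrow> right_nb P x \<le> y"
  unfolding right_nb_def by (intro Min_le) auto

lemma left_nb_mem:
  assumes "finite P" "has_left P x"
  shows "left_nb P x \<in> P" "left_nb P x < x"
proof -
  have "{y\<in>P. y < x} \<noteq> {}" using assms(2) unfolding has_left_def by auto
  then have "Max {y\<in>P. y < x} \<in> {y\<in>P. y < x}" using assms(1) by (intro Max_in) auto
  then show "left_nb P x \<in> P" "left_nb P x < x" unfolding left_nb_def by auto
qed

lemma left_nb_ge: "finite P \<Longrightarrow> y \<in> P \<Longrightarrow> y < x \<Longrightarrow> y \<le> left_nb P x"
  unfolding left_nb_def by (intro Max_ge) auto

lemma left_nb_right_nb:
  assumes "finite P" "x \<in> P" "has_right P x"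
  shows "left_nb P (right_nb P x) = x"
proof -
  have "y \<le> x" if "y \<in> P" "y < right_nb P x" for y
    using that right_nb_le[OF assms(1) that(1), of x] by (cases "x < y") auto
  then show ?thesis
    unfolding left_nb_def using assms right_nb_mem[OF assms(1,3)] by (intro Max_eqI) auto
qed

lemma right_nb_left_nb:
  assumes "finite P" "x \<in> P" "has_left P x"
  shows "right_nb P (left_nb P x) = x"
proof -
  have "x \<le> y" if "y \<in> P" "left_nb P x < y" for y
    using that left_nb_ge[OF assms(1) that(1), of x] by (cases "y < x") auto
  then show ?thesis
    unfolding right_nb_def using assms left_nb_mem[OF assms(1,3)] by (intro Min_eqI) auto
qed

lemma succ_pt_mem: "finite P \<Longrightarrow> has_succ P s p \<Longrightarrow> succ_pt P s p \<in> P"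
  unfolding has_succ_def succ_pt_def using right_nb_mem left_nb_mem by auto

lemma succ_pt_gt: "finite P \<Longrightarrow> has_succ P s p \<Longrightarrow> s < p \<Longrightarrow> p < succ_pt P s p"
  unfolding has_succ_def succ_pt_def using right_nb_mem by auto

lemma succ_pt_lt: "finite P \<Longrightarrow> has_succ P s p \<Longrightarrow> p < s \<Longrightarrow> succ_pt P s p < p"
  unfolding has_succ_def succ_pt_def using left_nb_mem by auto

lemma pred_pt_succ_pt:
  assumes "finite P" "p \<in> P" "p \<noteq> s" "has_succ P s p"
  shows "pred_pt P s (succ_pt P s p) = p"
proof (cases "s < p")
  case True
  then show ?thesis
    using assms succ_pt_gt[of P s p] left_nb_right_nb[of P p]
    unfolding pred_pt_def succ_pt_def has_succ_def by auto
next
  case False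
  then have "p < s" using assms(3) by simp
  then show ?thesis
    using assms succ_pt_lt[of P s p] right_nb_left_nb[of P p]
    unfolding pred_pt_def succ_pt_def has_succ_def by auto
qed

lemma pred_pt_ge: "finite P \<Longrightarrow> z \<in> P \<Longrightarrow> s < z \<Longrightarrow> z < q \<Longrightarrow> z \<le> pred_pt P s q"
  unfolding pred_pt_def using left_nb_ge by auto

lemma pred_pt_le: "finite P \<Longrightarrow> z \<in> P \<Longrightarrow> q < z \<Longrightarrow> z < s \<Longrightarrow> pred_pt P s q \<le> z"
  unfolding pred_pt_def using right_nb_le by auto

lemma succ_segments_nonoverlapping:
  assumes "finite P" "i \<in> P" "j \<in> P" "i \<noteq> j" "i \<noteq> s" "j \<noteq> s"
    and "has_succ P s i" "has_succ P s j"
  shows "max i (succ_pt P s i) \<le> min j (succ_pt P s j) \<or> max j (succ_pt P s j) \<le> min i (succ_pt P s i)"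
proof -
  have right: "max x (succ_pt P s x) \<le> min y (succ_pt P s y)"
    if "x \<in> P" "y \<in> P" "has_succ P s x" "has_succ P s y" "s < x" "x < y" for x y
    using that succ_pt_gt[of P s] right_nb_le[of P y x] assms(1) unfolding succ_pt_def by auto
  have left: "max x (succ_pt P s x) \<le> min y (succ_pt P s y)"
    if "x \<in> P" "y \<in> P" "has_succ P s x" "has_succ P s y" "x < y" "y < s" for x y
    using that succ_pt_lt[of P s] left_nb_ge[of P x y] assms(1) unfolding succ_pt_def by auto
  have across: "max x (succ_pt P s x) \<le> min y (succ_pt P s y)"
    if "has_succ P s x" "has_succ P s y" "x < s" "s < y" for x y
    using that succ_pt_gt[of P s y] succ_pt_lt[of P s x] assms(1) by auto
  show ?thesis
    using assms right[of i j] right[of j i] left[of i j] left[of j i] across[of i j] across[of j i]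
    by (cases i j rule: linorder_cases; cases "i < s"; cases "j < s") auto
qed

lemma btree_parent_range_pos:
  assumes "is_btree P s \<rho> par" "c \<in> P - {s}"
  shows "0 < \<rho> (par c)"
proof -
  have "par c \<noteq> c" "\<bar>c - par c\<bar> \<le> \<rho> (par c)" using assms unfolding is_btree_def by auto
  then show ?thesis by linarith
qed

lemma btree_source_has_child:
  assumes bt: "is_btree P s \<rho> par" and q: "q \<in> P - {s}"
  shows "\<exists>c\<in>P - {s}. par c = s"
proof -
  obtain n where "(par ^^ n) q = s" using bt q unfolding is_btree_def by blast
  then show ?thesis
    using q
  proof (induction n arbitrary: q)
    case 0
    then show ?case by simp
  next
    case (Suc n)
    have "par q \<in> P" using bt Suc.prems(2) unfolding is_btree_def by blast
    moreover have "(par ^^ n) (par q) = s" using Suc.prems(1) by (metis comp_apply funpow_Suc_right)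
    ultimately show ?case using Suc.IH Suc.prems(2) by (cases "par q = s") auto
  qed
qed

lemma btree_path_to_source:
  assumes bt: "is_btree P s \<rho> par" and p: "p \<in> P - {s}"
  obtains N where "(par ^^ N) p = s" "\<And>n. n < N \<Longrightarrow> (par ^^ n) p \<noteq> s"
    "\<And>n. n \<le> N \<Longrightarrow> (par ^^ n) p \<in> P"
proof -
  obtain N0 where "(par ^^ N0) p = s" using bt p unfolding is_btree_def by blast
  define N where "N = (LEAST n. (par ^^ n) p = s)"
  have reach: "(par ^^ N) p = s" unfolding N_def by (rule LeastI) fact
  have before: "(par ^^ n) p \<noteq> s" if "n < N" for n
    using that not_less_Least unfolding N_def by blast
  have "(par ^^ n) p \<in> P" if "n \<le> N" for n
    using that
  proof (induction n)
    case 0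
    then show ?case using p by simp
  next
    case (Suc n)
    then have "(par ^^ n) p \<in> P - {s}" using before by simp
    then show ?case using bt unfolding is_btree_def by simp
  qed
  then show ?thesis using that reach before by blast
qed

lemma down_crossing:
  fixes h :: "nat \<Rightarrow> real"
  assumes "0 \<le> h 0" "h N < 0"
  shows "\<exists>n<N. 0 \<le> h n \<and> h (Suc n) < 0"
  using assms
proof (induction N)
  case 0
  then show ?case by simp
next
  case (Suc N)
  then show ?case by (cases "h N < 0") (auto intro: less_SucI)
qed

lemma structured_tree_crossing_point:
  assumes "structured_tree P s \<rho> par pstar"
  shows "pstar \<in> P" "\<exists>c\<in>P - {s}. par c = pstar"
proof -
  have "root_crossing P s par pstar" using assms unfolding structured_tree_def by blast
  then show "pstar \<in> P" "\<exists>c\<in>P - {s}. par c = pstar"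
    unfolding root_crossing_def is_child_def by (auto split: if_splits)
qed

text \<open>The tree path from the root-crossing point back to s is a chain, so it visits every
  point between s and the root-crossing point, and each of them has a child on it.\<close>
lemma structured_tree_between_has_child:
  assumes fin: "finite P" and st: "structured_tree P s \<rho> par pstar" and z: "z \<in> P"
    and between: "s < z \<and> z \<le> pstar \<or> pstar \<le> z \<and> z < s"
  shows "\<exists>c\<in>P - {s}. par c = z"
proof -
  have bt: "is_btree P s \<rho> par"
    and chain: "\<And>q. on_path s par pstar q \<Longrightarrow> q \<noteq> s \<Longrightarrow> par q = pred_pt P s q"
    using st unfolding structured_tree_def by blast+
  note crossing = structured_tree_crossing_point[OF st]
  define X where "X n = (par ^^ n) pstar" for n
  have "pstar \<in> P - {s}" using crossing(1) between by auto
  then obtain N where N: "X N = s" "\<And>n. n < N \<Longrightarrow> X n \<noteq> s" "\<And>n. n \<le> N \<Longrightarrow> X n \<in> P"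
    using btree_path_to_source[OF bt] unfolding X_def by blast
  define h where "h n = (if s < z then X n - z else z - X n)" for n
  have "0 \<le> h 0" "h N < 0" using between N(1) unfolding h_def X_def by auto
  then obtain n where n: "n < N" "0 \<le> h n" "h (Suc n) < 0" using down_crossing by blast
  have "on_path s par pstar (X n)"
    unfolding on_path_def using N(2) n(1) by (intro exI[of _ n]) (auto simp: X_def)
  then have step: "X (Suc n) = pred_pt P s (X n)" using chain N(2)[OF n(1)] by (simp add: X_def)
  have Xn: "X n = z"
  proof (rule ccontr)
    assume "X n \<noteq> z"
    then have "s < z \<and> z < X n \<or> X n < z \<and> z < s"
      using n(2) between unfolding h_def by (auto split: if_splits)
    then have "0 \<le> h (Suc n)"
      unfolding h_def step using pred_pt_ge[OF fin z] pred_pt_le[OF fin z] by auto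
    then show False using n(3) by simp
  qed
  show ?thesis
  proof (cases n)
    case 0
    then show ?thesis using Xn crossing(2) unfolding X_def by simp
  next
    case (Suc n')
    then have "X n' \<in> P - {s}" "par (X n') = z" using N n Xn unfolding X_def by auto
    then show ?thesis by blast
  qed
qed

lemma structured_tree_crossing_in_reach:
  assumes st: "structured_tree P s \<rho> par pstar"
  shows "pstar \<in> in_reach P \<rho> pstar"
proof -
  have bt: "is_btree P s \<rho> par" using st unfolding structured_tree_def by blast
  have "0 < \<rho> pstar"
    using structured_tree_crossing_point(2)[OF st] btree_parent_range_pos[OF bt] by fastforce
  then show ?thesis unfolding in_reach_def using structured_tree_crossing_point(1)[OF st] by simp
qed

lemma structured_tree_source_not_zero_range:
  assumes st: "structured_tree P s \<rho> par pstar"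
  shows "s \<notin> zero_range_pts P s \<rho>"
proof -
  have bt: "is_btree P s \<rho> par" using st unfolding structured_tree_def by blast
  obtain c where "c \<in> P - {s}" using structured_tree_crossing_point(2)[OF st] by blast
  then obtain c' where "c' \<in> P - {s}" "par c' = s" using btree_source_has_child[OF bt] by blast
  then have "0 < \<rho> s" using btree_parent_range_pos[OF bt] by fastforce
  then show ?thesis unfolding zero_range_pts_def by simp
qed

lemma structured_tree_zero_range_segment:
  assumes fin: "finite P" and st: "structured_tree P s \<rho> par pstar"
    and z: "z \<in> zero_range_pts P s \<rho>"
  shows "Min (in_reach P \<rho> pstar) \<le> min z (succ_pt P s z)"
    and "max z (succ_pt P s z) \<le> Max (in_reach P \<rho> pstar)"
proof -
  define Re where "Re = in_reach P \<rho> pstar"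
  define q where "q = succ_pt P s z"
  have bt: "is_btree P s \<rho> par" using st unfolding structured_tree_def by blast
  note crossing = structured_tree_crossing_point[OF st]
  have zP: "z \<in> P" "z \<noteq> s" "has_succ P s z" "\<rho> z = 0"
    using z structured_tree_source_not_zero_range[OF st]
    unfolding zero_range_pts_def extreme_def by auto
  have childless: "\<not> (\<exists>c\<in>P - {s}. par c = z)"
    using btree_parent_range_pos[OF bt] zP(4) by fastforce
  have "pstar \<in> Re" unfolding Re_def by (rule structured_tree_crossing_in_reach[OF st])
  moreover have "finite Re" unfolding Re_def in_reach_def using fin by simp
  ultimately have hull: "Min Re \<le> pstar" "pstar \<le> Max Re" by simp_all
  have qP: "q \<in> P" "s < z \<Longrightarrow> z < q" "z < s \<Longrightarrow> q < z"
    unfolding q_def using fin zP succ_pt_mem succ_pt_gt succ_pt_lt by auto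
  have "par q = z" if "s < z \<and> Max Re < q \<or> z < s \<and> q < Min Re"
  proof -
    have "par q = pred_pt P s q"
      using st that qP unfolding structured_tree_def Re_def by force
    then show ?thesis unfolding q_def using pred_pt_succ_pt[OF fin zP(1-3)] by simp
  qed
  moreover have "q \<in> P - {s}" using qP zP(2) by force
  ultimately have q_in: "s < z \<Longrightarrow> q \<le> Max Re" "z < s \<Longrightarrow> Min Re \<le> q"
    using childless by force+
  have z_in: "s < z \<Longrightarrow> Min Re \<le> z" "z < s \<Longrightarrow> z \<le> Max Re"
    using structured_tree_between_has_child[OF fin st zP(1)] childless hull by force+
  show "Min Re \<le> min z q" "max z q \<le> Max Re"
    using zP(2) qP q_in z_in by (cases "s < z"; force)+
qed

lemma structured_tree_zero_range_sum_le:
  assumes fin: "finite P" and st: "structured_tree P s \<rho> par pstar"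
  shows "(\<Sum>z\<in>zero_range_pts P s \<rho>. rho_st P s z) \<le> 2 * \<rho> pstar"
proof -
  define Z where "Z = zero_range_pts P s \<rho>"
  define Re where "Re = in_reach P \<rho> pstar"
  define lo where "lo z = min z (succ_pt P s z)" for z
  define hi where "hi z = max z (succ_pt P s z)" for z
  have zP: "z \<in> P" "z \<noteq> s" "has_succ P s z" if "z \<in> Z" for z
    using that structured_tree_source_not_zero_range[OF st]
    unfolding Z_def zero_range_pts_def extreme_def by auto
  have seg: "Min Re \<le> lo z \<and> lo z < hi z \<and> hi z \<le> Max Re" if z: "z \<in> Z" for z
  proof -
    have "z \<noteq> succ_pt P s z"
      using zP[OF z] succ_pt_gt[OF fin, of s z] succ_pt_lt[OF fin, of s z] by force
    then have "lo z < hi z" unfolding lo_def hi_def by auto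
    moreover have "Min Re \<le> lo z" "hi z \<le> Max Re"
      unfolding Re_def lo_def hi_def
      using structured_tree_zero_range_segment[OF fin st z[unfolded Z_def]] by simp_all
    ultimately show ?thesis by simp
  qed
  have rho_st: "rho_st P s z = hi z - lo z" if "z \<in> Z" for z
    using zP[OF that] by (auto simp: rho_st_def hi_def lo_def)
  have Re: "pstar \<in> Re" "finite Re"
    unfolding Re_def using structured_tree_crossing_in_reach[OF st] fin
    by (auto simp: in_reach_def)
  then have "Re \<noteq> {}" by blast
  have hull: "Min Re \<le> Max Re"
    using Min_le[OF Re(2,1)] Max_ge[OF Re(2,1)] by linarith
  have "Max Re \<in> Re" "Min Re \<in> Re" using Max_in Min_in Re(2) \<open>Re \<noteq> {}\<close> by blast+
  then have width: "Max Re - Min Re \<le> 2 * \<rho> pstar"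
    unfolding Re_def in_reach_def by (auto simp: abs_le_iff)
  have "(\<Sum>z\<in>Z. rho_st P s z) = (\<Sum>z\<in>Z. hi z - lo z)"
    by (rule sum.cong) (simp_all add: rho_st)
  also have "\<dots> \<le> Max Re - Min Re"
  proof (rule sum_interval_lengths_le)
    show "finite Z" unfolding Z_def zero_range_pts_def using fin by simp
    show "hi i \<le> lo j \<or> hi j \<le> lo i" if "i \<in> Z" "j \<in> Z" "i \<noteq> j" for i j
      unfolding hi_def lo_def by (rule succ_segments_nonoverlapping[OF fin]) (use zP that in auto)
  qed (use hull seg in auto)
  finally show ?thesis using width unfolding Z_def by simp
qed

lemma structured_tree_outside_Zk_powr_sum_le:
  assumes fin: "finite P" and st: "structured_tree P s \<rho> par pstar" and Zk: "is_Zk k P s \<rho> Zk"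
    and "1 \<le> k" "1 \<le> \<alpha>"
  shows "(\<Sum>z\<in>zero_range_pts P s \<rho> - Zk. rho_st P s z powr \<alpha>)
           \<le> 2 powr \<alpha> / real k powr (\<alpha> - 1) * \<rho> pstar powr \<alpha>"
proof -
  define Z where "Z = zero_range_pts P s \<rho>"
  have "0 \<le> \<rho> pstar"
    using structured_tree_crossing_in_reach[OF st] by (simp add: in_reach_def)
  have "(\<Sum>z\<in>Z - Zk. rho_st P s z powr \<alpha>) \<le> (2 * \<rho> pstar) powr \<alpha> / real k powr (\<alpha> - 1)"
  proof (rule sum_powr_outside_top_le)
    show "finite Z" unfolding Z_def zero_range_pts_def using fin by simp
    show "0 \<le> rho_st P s z" if "z \<in> Z" for z
      using that structured_tree_source_not_zero_range[OF st] unfolding Z_def rho_st_def by auto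
  qed (use Zk structured_tree_zero_range_sum_le[OF fin st] assms(4,5)
       in \<open>auto simp: Z_def is_Zk_def Let_def\<close>)
  also have "\<dots> = 2 powr \<alpha> / real k powr (\<alpha> - 1) * \<rho> pstar powr \<alpha>"
    using \<open>0 \<le> \<rho> pstar\<close> by (simp add: powr_mult)
  finally show ?thesis unfolding Z_def .
qed

lemma cost_rho_k:
  assumes fin: "finite P" and two: "\<not> one_sided P s" and sub: "Zk \<subseteq> zero_range_pts P s \<rho>"
  shows "cost \<alpha> P (rho_k P s \<rho> Zk)
           = cost \<alpha> P \<rho> + (\<Sum>z\<in>zero_range_pts P s \<rho> - Zk. rho_st P s z powr \<alpha>)"
proof -
  define Z where "Z = zero_range_pts P s \<rho>"
  have ZP: "Z \<subseteq> P" unfolding Z_def zero_range_pts_def by auto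
  have "rho_k P s \<rho> Zk p powr \<alpha> = \<rho> p powr \<alpha> + (if p \<in> Z - Zk then rho_st P s p powr \<alpha> else 0)"
    for p
    using two sub unfolding rho_k_def Z_def zero_range_pts_def by auto
  then have "cost \<alpha> P (rho_k P s \<rho> Zk)
      = cost \<alpha> P \<rho> + (\<Sum>p\<in>P. if p \<in> Z - Zk then rho_st P s p powr \<alpha> else 0)"
    unfolding cost_def by (simp add: sum.distrib)
  also have "(\<Sum>p\<in>P. if p \<in> Z - Zk then rho_st P s p powr \<alpha> else 0)
      = (\<Sum>z\<in>Z - Zk. rho_st P s z powr \<alpha>)"
  proof -
    have "P \<inter> (Z - Zk) = Z - Zk" using ZP by blast
    then show ?thesis
      using sum.inter_restrict[OF fin, of "\<lambda>p. rho_st P s p powr \<alpha>" "Z - Zk"] by simp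
  qed
  finally show ?thesis unfolding Z_def .
qed

theorem lemma2:
  fixes P :: "real set" and s :: real and k :: nat and \<alpha> :: real
    and \<rho>opt :: "real \<Rightarrow> real" and Zk :: "real set"
  assumes "finite P" and "s \<in> P" and "k \<ge> 1" and "\<alpha> > 1"
    and "is_rho_opt \<alpha> P s \<rho>opt"
    and "is_Zk k P s \<rho>opt Zk"
  shows "cost \<alpha> P (rho_k P s \<rho>opt Zk)
           \<le> (1 + 2 powr \<alpha> / real k powr (\<alpha> - 1)) * cost \<alpha> P \<rho>opt"
proof (cases "one_sided P s")
  case True
  then have "rho_k P s \<rho>opt Zk = \<rho>opt" unfolding rho_k_def by auto
  moreover have "0 \<le> cost \<alpha> P \<rho>opt" unfolding cost_def by (simp add: sum_nonneg)
  ultimately show ?thesis by (simp add: distrib_right)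
next
  case False
  define c where "c = 2 powr \<alpha> / real k powr (\<alpha> - 1)"
  obtain par pstar where st: "structured_tree P s \<rho>opt par pstar"
    using assms(5) False unfolding is_rho_opt_def by auto
  have "(\<Sum>z\<in>zero_range_pts P s \<rho>opt - Zk. rho_st P s z powr \<alpha>) \<le> c * \<rho>opt pstar powr \<alpha>"
    unfolding c_def using structured_tree_outside_Zk_powr_sum_le[OF assms(1) st assms(6,3)] assms(4)
    by simp
  also have "\<dots> \<le> c * cost \<alpha> P \<rho>opt"
    unfolding cost_def c_def using structured_tree_crossing_point(1)[OF st] assms(1)
    by (intro mult_left_mono member_le_sum) auto
  finally show ?thesis
    using cost_rho_k[OF assms(1) False] assms(6) unfolding c_def is_Zk_def Let_def
    by (simp add: distrib_right)
qed

end
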